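(* Let $(L,\le,(\sqsubseteq_\alpha)_{\alpha<\kappa})$ be a model of Axioms 1–4 with $\kappa$ a limit ordinal. Let $\alpha<\kappa$, $x\in L$, $X\subseteq(x]_\alpha$, and let $y=\bigsqcup_\alpha X$. Then $y$ is the $\le$-least element of $[y]_\alpha$, and $y\sqsubseteq_{\alpha+1}z$ for all $z\in[y]_\alpha$.
   Context: Setting (model of Axioms 1–4). Let $(L,\le)$ be a complete lattice with join operation $\bigvee$ and least element $\perp$. Let $\kappa>0$ be an ordinal, and for each ordinal $\alpha<\kappa$ let $\sqsubseteq_\alpha$ be a preorder on $L$. Derived relations: - $x=_\alpha y$ means $x\sqsubseteq_\alpha y$ and $y\sqsubseteq_\alpha x$. - $x\sqsubset_\alpha y$ means $x\sqsubseteq_\alpha y$ and not $x=_\alpha y$. Derived sets, for $x\in L$ and $\alpha<\kappa$: - $(x]_\alpha=\{y\in L:\forall\beta<\alpha,\ x=_\beta y\}$. - $[x]_\alpha=\{y\in L: x=_\alpha y\}$. For a set $X$, $X\sqsubseteq_\alpha y$ means $x\sqsubseteq_\alpha y$ for all $x\in X$. The structure is a model of Axioms 1–4 if: - (A1) for all $\alpha<\beta<\kappa$, $x\sqsubseteq_\beta y$ implies $x=_\alpha y$; - (A2) $\bigcap_{\alpha<\kappa}=_\alpha$ is the identity relation on $L$; - (A3) for every $x\in L$, every $\alpha<\kappa$ and every $X\subseteq(x]_\alpha$ there is $y\in(x]_\alpha$ with $X\sqsubseteq_\alpha y$ such that for all $z\in(x]_\alpha$ with $X\sqsubseteq_\alpha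 z$ we have $y\sqsubseteq_\alpha z$ and $y\le z$; - (A4) for every nonempty $X\subseteq L$, every $\alpha<\kappa$ and every $y\in L$, if $y=_\alpha x$ for all $x\in X$ then $y=_\alpha\bigvee X$. The element $y$ of (A3) is unique and is denoted $\bigsqcup_\alpha X$ (relative to $(x]_\alpha$). *)

theory Defs
  imports Main
begin

text \<open>Ordinals below kappa are modelled by a well-ordered type 'k (order type kappa;
nonempty types give kappa > 0). The family of preorders is sq :: 'k => 'a => 'a => bool,
where sq al x y means x sqsubseteq_al y.\<close>

definition eqa :: "('k \<Rightarrow> 'a \<Rightarrow> 'a \<Rightarrow> bool) \<Rightarrow> 'k \<Rightarrow> 'a \<Rightarrow> 'a \<Rightarrow> bool" where
  "eqa sq al x y \<longleftrightarrow> sq al x y \<and> sq al y x"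

definition sqless :: "('k \<Rightarrow> 'a \<Rightarrow> 'a \<Rightarrow> bool) \<Rightarrow> 'k \<Rightarrow> 'a \<Rightarrow> 'a \<Rightarrow> bool" where
  "sqless sq al x y \<longleftrightarrow> sq al x y \<and> \<not> eqa sq al x y"

definition downcl :: "('k::wellorder \<Rightarrow> 'a \<Rightarrow> 'a \<Rightarrow> bool) \<Rightarrow> 'k \<Rightarrow> 'a \<Rightarrow> 'a set" where
  "downcl sq al x = {y. \<forall>be<al. eqa sq be x y}"

definition eqcl :: "('k \<Rightarrow> 'a \<Rightarrow> 'a \<Rightarrow> bool) \<Rightarrow> 'k \<Rightarrow> 'a \<Rightarrow> 'a set" where
  "eqcl sq al x = {y. eqa sq al x y}"

text \<open>y is the element given by (A3) for X relative to (x]_al, i.e. y = Sqcup_al X\<close>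
definition is_sqlub :: "('k::wellorder \<Rightarrow> 'a::complete_lattice \<Rightarrow> 'a \<Rightarrow> bool) \<Rightarrow> 'k \<Rightarrow> 'a \<Rightarrow> 'a set \<Rightarrow> 'a \<Rightarrow> bool" where
  "is_sqlub sq al x X y \<longleftrightarrow>
     y \<in> downcl sq al x \<and> (\<forall>w\<in>X. sq al w y) \<and>
     (\<forall>z\<in>downcl sq al x. (\<forall>w\<in>X. sq al w z) \<longrightarrow> sq al y z \<and> y \<le> z)"

definition model_A1_4 :: "('k::wellorder \<Rightarrow> 'a::complete_lattice \<Rightarrow> 'a \<Rightarrow> bool) \<Rightarrow> bool" where
  "model_A1_4 sq \<longleftrightarrow>
     (\<forall>al. (\<forall>x. sq al x x) \<and> (\<forall>x y z. sq al x y \<longrightarrow> sq al y z \<longrightarrow> sq al x z)) \<and>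
     (\<forall>al be x y. al < be \<longrightarrow> sq be x y \<longrightarrow> eqa sq al x y) \<and>
     (\<forall>x y. (\<forall>al. eqa sq al x y) \<longrightarrow> x = y) \<and>
     (\<forall>x al X. X \<subseteq> downcl sq al x \<longrightarrow> (\<exists>y. is_sqlub sq al x X y)) \<and>
     (\<forall>X al y. X \<noteq> {} \<longrightarrow> (\<forall>x\<in>X. eqa sq al y x) \<longrightarrow> eqa sq al y (Sup X))"

definition limit_type :: "'k::wellorder itself \<Rightarrow> bool" where
  "limit_type _ \<longleftrightarrow> (\<forall>al::'k. \<exists>be. al < be)"

text \<open>al + 1 (successor ordinal), meaningful when kappa is a limit\<close>
definition osuc :: "'k::wellorder \<Rightarrow> 'k" where
  "osuc al = (LEAST be. al < be)"

end

theory Submission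
  imports Defs
begin

(* Let y = Sqcup_al X relative to (x]_al.
   (1) By (A1) and transitivity of =_be, the class [y]_al lies inside (x]_al, and every
       z in [y]_al is a sq_al-upper bound of X; the minimality clause of (A3) then gives
       y <= z.  So y is the <=-least element of [y]_al.
   (2) Since kappa is a limit, al+1 < kappa, and by (A1) the set (y]_(al+1) is exactly [y]_al.
       Applying (A3) to the empty family in (y]_(al+1) yields an element b of [y]_al that is
       <=-below and sq_(al+1)-below all of [y]_al.  Any <=-least element of [y]_al
       therefore equals b, hence is sq_(al+1)-below the whole class.
   The file first unpacks the axioms, then proves the two facts about successors, then (1)
   and (2) as separate lemmas, from which the theorem follows directly. *)

lemma model_sq_refl: "model_A1_4 sq \<Longrightarrow> sq al w w"
  unfolding model_A1_4_def by simp

lemma model_sq_trans: "model_A1_4 sq \<Longrightarrow> sq al u v \<Longrightarrow> sq al v w \<Longrightarrow> sq al u w"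
  unfolding model_A1_4_def by simp

lemma model_A1: "model_A1_4 sq \<Longrightarrow> al < be \<Longrightarrow> sq be u v \<Longrightarrow> eqa sq al u v"
  unfolding model_A1_4_def by simp

lemma model_A3: "model_A1_4 sq \<Longrightarrow> Y \<subseteq> downcl sq al u \<Longrightarrow> \<exists>v. is_sqlub sq al u Y v"
  unfolding model_A1_4_def by simp

lemma model_eqa_trans: "model_A1_4 sq \<Longrightarrow> eqa sq al u v \<Longrightarrow> eqa sq al v w \<Longrightarrow> eqa sq al u w"
  unfolding eqa_def by (metis model_sq_trans)

lemma eqcl_self: "model_A1_4 sq \<Longrightarrow> y \<in> eqcl sq al y"
  by (simp add: eqcl_def eqa_def model_sq_refl)

lemma less_osuc: "limit_type TYPE('k) \<Longrightarrow> (al::'k::wellorder) < osuc al"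
  unfolding limit_type_def osuc_def by (metis LeastI_ex)

lemma le_of_less_osuc: "be < osuc al \<Longrightarrow> be \<le> (al::'k::wellorder)"
  unfolding osuc_def by (metis not_less_Least not_le)

lemma downcl_osuc_eq_eqcl:
  assumes model: "model_A1_4 sq" and limit: "limit_type TYPE('k)"
  shows "downcl sq (osuc (al::'k::wellorder)) y = eqcl sq al y"
proof (intro set_eqI iffI)
  fix z assume "z \<in> downcl sq (osuc al) y"
  then show "z \<in> eqcl sq al y"
    using less_osuc[OF limit] by (simp add: downcl_def eqcl_def)
next
  fix z assume "z \<in> eqcl sq al y"
  then have yz: "eqa sq al y z" by (simp add: eqcl_def)
  have "eqa sq be y z" if "be < osuc al" for be
  proof (cases "be = al")
    case True then show ?thesis using yz by simp
  next
    case False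
    with le_of_less_osuc[OF that] have "be < al" by simp
    then show ?thesis using model_A1[OF model _ conjunct1[OF yz[unfolded eqa_def]]] by simp
  qed
  then show "z \<in> downcl sq (osuc al) y" by (simp add: downcl_def)
qed

lemma eqcl_subset_downcl:
  assumes model: "model_A1_4 sq" and y: "y \<in> downcl sq al x"
  shows "eqcl sq al y \<subseteq> downcl sq al x"
proof
  fix z assume "z \<in> eqcl sq al y"
  then have yz: "sq al y z" by (simp add: eqcl_def eqa_def)
  have "eqa sq be x z" if "be < al" for be
  proof -
    have "eqa sq be x y" using y that by (simp add: downcl_def)
    moreover have "eqa sq be y z" using model_A1[OF model that yz] .
    ultimately show ?thesis by (rule model_eqa_trans[OF model])
  qed
  then show "z \<in> downcl sq al x" by (simp add: downcl_def)
qed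

lemma sqlub_least_in_eqcl:
  assumes model: "model_A1_4 sq" and lub: "is_sqlub sq al x X y" and z: "z \<in> eqcl sq al y"
  shows "y \<le> z"
proof -
  have y_cone: "y \<in> downcl sq al x" and y_ub: "\<forall>w\<in>X. sq al w y"
    and y_least: "\<forall>z\<in>downcl sq al x. (\<forall>w\<in>X. sq al w z) \<longrightarrow> sq al y z \<and> y \<le> z"
    using lub unfolding is_sqlub_def by simp_all
  have yz: "sq al y z" using z by (simp add: eqcl_def eqa_def)
  have "z \<in> downcl sq al x" using eqcl_subset_downcl[OF model y_cone] z by (rule subsetD)
  moreover have "\<forall>w\<in>X. sq al w z"
    using y_ub model_sq_trans[OF model _ yz] by simp
  ultimately show "y \<le> z" using y_least by simp
qed

text \<open>(A3) for the empty family in (y]_(al+1) = [y]_al produces a common lower bound of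
  the class for both orders; a <=-least element of the class must coincide with it.\<close>
lemma least_in_eqcl_imp_sq_osuc:
  assumes model: "model_A1_4 sq" and limit: "limit_type TYPE('k)"
    and least: "\<forall>z\<in>eqcl sq al y. y \<le> z"
  shows "\<forall>z\<in>eqcl sq (al::'k::wellorder) y. sq (osuc al) y z"
proof -
  have cone: "downcl sq (osuc al) y = eqcl sq al y"
    by (rule downcl_osuc_eq_eqcl[OF model limit])
  obtain b where "is_sqlub sq (osuc al) y {} b" using model_A3[OF model] by blast
  then have b_cl: "b \<in> eqcl sq al y"
    and b_bot: "\<forall>z\<in>eqcl sq al y. sq (osuc al) b z \<and> b \<le> z"
    unfolding is_sqlub_def cone by auto
  have "b \<le> y" using b_bot eqcl_self[OF model] by blast
  moreover have "y \<le> b" using least b_cl by blast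
  ultimately have "b = y" by (rule order.antisym)
  then show ?thesis using b_bot by blast
qed

theorem mainTheorem5:
  fixes sq :: "'k::wellorder \<Rightarrow> 'a::complete_lattice \<Rightarrow> 'a \<Rightarrow> bool"
    and al :: 'k and x y :: 'a and X :: "'a set"
  assumes "model_A1_4 sq"
    and "limit_type TYPE('k)"
    and "X \<subseteq> downcl sq al x"
    and "is_sqlub sq al x X y"
  shows "y \<in> eqcl sq al y \<and> (\<forall>z\<in>eqcl sq al y. y \<le> z)
         \<and> (\<forall>z\<in>eqcl sq al y. sq (osuc al) y z)"
proof -
  have least: "\<forall>z\<in>eqcl sq al y. y \<le> z"
    using sqlub_least_in_eqcl[OF assms(1) assms(4)] by blast
  show ?thesis
    using eqcl_self[OF assms(1)] least least_in_eqcl_imp_sq_osuc[OF assms(1,2) least] by blast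
qed

end
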